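(* Let $\lambda\in\rho(A)$ with $\xi_1(\lambda)\ne0$ and $w(\lambda)\ne0$, and let $\mathcal K(\cdot,\cdot,\lambda):(0,\infty)\times(0,\infty)\to\mathbb C^{n\times n}$ be given by $\mathcal K_{ik}(x,x',\lambda)=K(x,x',\lambda)$ where $x$ is viewed as a point of $N_i$ and $x'$ as a point of $N_k$. Then there do not exist $p\in\mathbb N$, functions $w_1,\dots,w_p\in\ker(A_T-\lambda I)$ and constants $\alpha_{lq},\beta_{lq}\in\mathbb C$ ($l,q=1,\dots,p$) such that for all $x,x'\in(0,\infty)$ $$\mathcal K(x,x',\lambda)=\begin{cases}\sum_{q=1}^p\Big(\sum_{l=1}^p\alpha_{lq}w_l(x)\Big)w_q(x')^T,& x'\le x,\\[2pt] \sum_{q=1}^p\Big(\sum_{l=1}^p\beta_{lq}w_l(x)\Big)w_q(x')^T,& x'>x,\end{cases}$$ where the $w_q$ are regarded as $\mathbb C^n$-valued column vectors on $(0,\infty)$.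
   Context: Fix an integer $n\ge 2$, constants $c_1,\dots,c_n>0$ and $0\le a_1\le\dots\le a_n<\infty$. Let $N_1,\dots,N_n$ be $n$ disjoint copies of $(0,\infty)$ and $N$ the star-shaped network obtained from $\overline{N_1},\dots,\overline{N_n}$ by identifying their endpoints $0$. $H=\prod_kL^2(N_k)$. $A$: $D(A)=\{u\in\prod_kH^2(N_k): u_i(0)=u_k(0)\ \forall i,k,\ \sum_kc_ku_k'(0^+)=0\}$, $Au=(-c_ku_k''+a_ku_k)_k$. $\ker(A_T-\lambda I)$ denotes the set of $u=(u_1,\dots,u_n)\in\prod_kC^2([0,\infty))$ with $-c_ku_k''+a_ku_k=\lambda u_k$ on $(0,\infty)$ for each $k$, $u_i(0)=u_k(0)$ for all $i,k$, and $\sum_kc_ku_k'(0^+)=0$ (no integrability at infinity required). Complex square root: $\sqrt{re^{i\phi}}=\sqrt re^{i\phi/2}$, $r\ge0$, $\phi\in[-\pi,\pi)$. For $\lambda\in\mathbb C$: $\xi_k(\lambda)=\sqrt{(\lambda-a_k)/c_k}$, $s_k(\lambda)=-\sum_{l\ne k}c_l\xi_l(\lambda)/(c_k\xi_k(\lambda))$. For $j\in\{1,\dots,n\}$, $F^{\pm,j}_\lambda:N\to\mathbb C$ is given for $x\in\overline{N_k}$ by $F^{\pm,j}_\lambda(x)=\cos(\xi_j(\lambda)x)\pm is_j(\lambda)\sin(\xi_j(\lambda)x)$ if $k=j$ and $\exp(\pm i\xi_k(\lambda)x)$ if $k\ne j$. $w(\lambda)=i\sum_jc_j\xi_j(\lambda)$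 if $\Im\lambda>0$ and $w(\lambda)=-i\sum_jc_j\xi_j(\lambda)$ if $\Im\lambda\le0$. For $w(\lambda)\ne0$, $x\in\overline{N_j}$, $x'\in N$ (sign $+$ if $\Im\lambda>0$, $-$ if $\Im\lambda\le0$; $j+1$ modulo $n$): $K(x,x',\lambda)=\frac1{w(\lambda)}F^{\pm,j}_\lambda(x)F^{\pm,j+1}_\lambda(x')$ if $x'\in\overline{N_j}$, $x'>x$; and $K(x,x',\lambda)=\frac1{w(\lambda)}F^{\pm,j+1}_\lambda(x)F^{\pm,j}_\lambda(x')$ if $x'\in\overline{N_k}$, $k\ne j$, or $x'\in\overline{N_j}$, $x'<x$. ($K$ is the kernel of the resolvent $(\lambda I-A)^{-1}$ for $\lambda\in\rho(A)$, $\Re\lambda\ge a_1$.) *)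

theory Defs
  imports "HOL-Analysis.Analysis"
begin

text \<open>Edges are indexed by k in {1..n}; a function on the network N is a family
  u :: nat => real => complex, u k being its restriction to the edge N_k = (0,infinity)
  (closure [0,infinity)).\<close>

definition arg_pi :: "complex \<Rightarrow> real" where
  "arg_pi z = (if Arg z = pi then - pi else Arg z)"

definition psqrt :: "complex \<Rightarrow> complex" where
  "psqrt z = complex_of_real (sqrt (cmod z)) * exp (\<i> * complex_of_real (arg_pi z / 2))"

definition xi :: "(nat \<Rightarrow> real) \<Rightarrow> (nat \<Rightarrow> real) \<Rightarrow> nat \<Rightarrow> complex \<Rightarrow> complex" where
  "xi c a k lam = psqrt ((lam - complex_of_real (a k)) / complex_of_real (c k))"

definition s_fun :: "nat \<Rightarrow> (nat \<Rightarrow> real) \<Rightarrow> (nat \<Rightarrow> real) \<Rightarrow> nat \<Rightarrow> complex \<Rightarrow> complex" where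
  "s_fun n c a k lam =
     - (\<Sum>l\<in>{1..n} - {k}. complex_of_real (c l) * xi c a l lam)
       / (complex_of_real (c k) * xi c a k lam)"

definition sgn_lam :: "complex \<Rightarrow> complex" where
  "sgn_lam lam = (if Im lam > 0 then 1 else -1)"

text \<open>F^{+-,j}_lam evaluated at the point x of the edge N_k\<close>
definition Ffun :: "nat \<Rightarrow> (nat \<Rightarrow> real) \<Rightarrow> (nat \<Rightarrow> real) \<Rightarrow> complex \<Rightarrow> nat \<Rightarrow> nat \<Rightarrow> real \<Rightarrow> complex" where
  "Ffun n c a lam j k x =
     (if k = j then cos (xi c a j lam * complex_of_real x)
                    + sgn_lam lam * \<i> * s_fun n c a j lam * sin (xi c a j lam * complex_of_real x)
      else exp (sgn_lam lam * \<i> * xi c a k lam * complex_of_real x))"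

definition wfun :: "nat \<Rightarrow> (nat \<Rightarrow> real) \<Rightarrow> (nat \<Rightarrow> real) \<Rightarrow> complex \<Rightarrow> complex" where
  "wfun n c a lam =
     (if Im lam > 0 then \<i> * (\<Sum>j\<in>{1..n}. complex_of_real (c j) * xi c a j lam)
      else - \<i> * (\<Sum>j\<in>{1..n}. complex_of_real (c j) * xi c a j lam))"

definition nxt :: "nat \<Rightarrow> nat \<Rightarrow> nat" where
  "nxt n j = j mod n + 1"

text \<open>Matrix kernel: Kmat i k x x' = K(x,x',lam) with x on N_i and x' on N_k\<close>
definition Kmat :: "nat \<Rightarrow> (nat \<Rightarrow> real) \<Rightarrow> (nat \<Rightarrow> real) \<Rightarrow> complex \<Rightarrow> nat \<Rightarrow> nat \<Rightarrow> real \<Rightarrow> real \<Rightarrow> complex" where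
  "Kmat n c a lam i k x x' =
     (if k = i \<and> x' > x
      then Ffun n c a lam i i x * Ffun n c a lam (nxt n i) k x' / wfun n c a lam
      else Ffun n c a lam (nxt n i) i x * Ffun n c a lam i k x' / wfun n c a lam)"

definition kerAT :: "nat \<Rightarrow> (nat \<Rightarrow> real) \<Rightarrow> (nat \<Rightarrow> real) \<Rightarrow> complex \<Rightarrow> (nat \<Rightarrow> real \<Rightarrow> complex) set" where
  "kerAT n c a lam = {u. \<exists>d1 d2 :: nat \<Rightarrow> real \<Rightarrow> complex.
      (\<forall>k\<in>{1..n}.
         (\<forall>x\<ge>0. (u k has_vector_derivative d1 k x) (at x within {0..})) \<and>
         (\<forall>x\<ge>0. (d1 k has_vector_derivative d2 k x) (at x within {0..})) \<and>
         continuous_on {0..} (d2 k) \<and>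
         (\<forall>x>0. - complex_of_real (c k) * d2 k x + complex_of_real (a k) * u k x = lam * u k x)) \<and>
      (\<forall>i\<in>{1..n}. \<forall>k\<in>{1..n}. u i 0 = u k 0) \<and>
      (\<Sum>k\<in>{1..n}. complex_of_real (c k) * d1 k 0) = 0}"

definition inH :: "nat \<Rightarrow> (nat \<Rightarrow> real \<Rightarrow> complex) \<Rightarrow> bool" where
  "inH n f = (\<forall>k\<in>{1..n}. f k measurable_on {0<..} \<and>
                          (\<lambda>x. (cmod (f k x))^2) integrable_on {0<..})"

definition normH :: "nat \<Rightarrow> (nat \<Rightarrow> real \<Rightarrow> complex) \<Rightarrow> real" where
  "normH n f = sqrt (\<Sum>k\<in>{1..n}. integral {0<..} (\<lambda>x. (cmod (f k x))^2))"

text \<open>u in D(A), with v = u' and g = u'' (weak derivatives, given as witnesses):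
  u_k in H^2(0,infinity) (u_k, u_k', u_k'' in L^2, u_k and u_k' absolutely continuous),
  continuity at the vertex and Kirchhoff condition.\<close>
definition domA :: "nat \<Rightarrow> (nat \<Rightarrow> real) \<Rightarrow> (nat \<Rightarrow> real \<Rightarrow> complex) \<Rightarrow> (nat \<Rightarrow> real \<Rightarrow> complex)
                    \<Rightarrow> (nat \<Rightarrow> real \<Rightarrow> complex) \<Rightarrow> bool" where
  "domA n c u v g =
     (inH n u \<and> inH n v \<and> inH n g \<and>
      (\<forall>k\<in>{1..n}. \<forall>x\<ge>0. (v k has_integral (u k x - u k 0)) {0..x} \<and>
                          (g k has_integral (v k x - v k 0)) {0..x}) \<and>
      (\<forall>i\<in>{1..n}. \<forall>k\<in>{1..n}. u i 0 = u k 0) \<and>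
      (\<Sum>k\<in>{1..n}. complex_of_real (c k) * v k 0) = 0)"

text \<open>(lam I - A) u = f in H, i.e. almost everywhere on each edge, where A u = (-c_k u_k'' + a_k u_k)_k\<close>
definition res_eq :: "nat \<Rightarrow> (nat \<Rightarrow> real) \<Rightarrow> (nat \<Rightarrow> real) \<Rightarrow> complex \<Rightarrow> (nat \<Rightarrow> real \<Rightarrow> complex)
                     \<Rightarrow> (nat \<Rightarrow> real \<Rightarrow> complex) \<Rightarrow> (nat \<Rightarrow> real \<Rightarrow> complex) \<Rightarrow> bool" where
  "res_eq n c a lam u g f =
     (\<forall>k\<in>{1..n}. \<exists>N. negligible N \<and> (\<forall>x\<in>{0<..} - N.
        lam * u k x - (- complex_of_real (c k) * g k x + complex_of_real (a k) * u k x) = f k x))"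

definition resolvent_set :: "nat \<Rightarrow> (nat \<Rightarrow> real) \<Rightarrow> (nat \<Rightarrow> real) \<Rightarrow> complex set" where
  "resolvent_set n c a = {lam.
     (\<forall>f. inH n f \<longrightarrow> (\<exists>u v g. domA n c u v g \<and> res_eq n c a lam u g f)) \<and>
     (\<forall>u v g. domA n c u v g \<and> res_eq n c a lam u g (\<lambda>k x. 0) \<longrightarrow>
        (\<forall>k\<in>{1..n}. \<exists>N. negligible N \<and> (\<forall>x\<in>{0<..} - N. u k x = 0))) \<and>
     (\<exists>C. \<forall>u v g f. domA n c u v g \<and> inH n f \<and> res_eq n c a lam u g f \<longrightarrow>
        normH n u \<le> C * normH n f)}"

end

theory Submission
  imports Defs
begin

(* Suppose it were, with functions W_1..W_p.  Freeze x = 1 on the edge N_1 and look at the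
   region x' > 1: the row x' |-> (K_1k(1, x'))_k is a linear combination V of the W_q, and
   V lies in ker(A_T - lam I), which is a linear space.  By the explicit formula for K, each
   V_k is C_k exp(z_k x') for x' > 1, with z_k = +-i xi_k and C_k <> 0.  Such a kernel
   element must have V_k(0) = C_k and V_k'(0) = C_k z_k, so continuity at the vertex makes
   all C_k equal to some C and the Kirchhoff condition becomes C * w(lam) = 0, contradicting
   w(lam) <> 0.  Only n >= 2, c_k > 0 and w(lam) <> 0 are used. *)

lemma has_vector_derivative_cexp:
  "((\<lambda>t. exp (z * complex_of_real t)) has_vector_derivative z * exp (z * complex_of_real t))
     (at t within S)"
proof -
  have "((\<lambda>w. exp (z * w)) has_field_derivative exp (z * complex_of_real t) * z)
          (at (complex_of_real t))"
    by (auto intro!: derivative_eq_intros)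
  from has_vector_derivative_real_field[OF this] show ?thesis
    by (simp add: mult.commute)
qed

lemma halfline_constant:
  fixes f :: "real \<Rightarrow> 'a::banach"
  assumes deriv: "\<And>t. t \<ge> 0 \<Longrightarrow> (f has_vector_derivative f' t) (at t within {0..})"
    and zero: "\<And>t. t > 0 \<Longrightarrow> f' t = 0"
    and "s \<ge> 0" "t \<ge> 0"
  shows "f s = f t"
proof (rule has_derivative_zero_unique_strong_convex[of "{0..}" "{0}"])
  show "continuous_on {0..} f"
    using deriv by (intro has_derivative_continuous_on) (auto simp: has_vector_derivative_def)
  show "(f has_derivative (\<lambda>h. 0)) (at x within {0..})" if "x \<in> {0..} - {0}" for x
    using deriv[of x] zero[of x] that by (simp add: has_vector_derivative_def)
qed (use assms in auto)

(* A solution of V'' = z^2 V on [0, oo) that coincides with C exp(z t) for all large t obeys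
   the first-order equation V' = z V on the whole half-line: its Wronskian with exp(z t) is
   constant, and it vanishes on the tail. *)
lemma exp_tail_first_order:
  fixes V V' V'' :: "real \<Rightarrow> complex"
  assumes d1: "\<And>t. t \<ge> 0 \<Longrightarrow> (V has_vector_derivative V' t) (at t within {0..})"
    and d2: "\<And>t. t \<ge> 0 \<Longrightarrow> (V' has_vector_derivative V'' t) (at t within {0..})"
    and ode: "\<And>t. t > 0 \<Longrightarrow> V'' t = z * z * V t"
    and tail: "\<And>t. t > T \<Longrightarrow> V t = C * exp (z * complex_of_real t)"
    and "t \<ge> 0"
  shows "V' t = z * V t"
proof -
  define e where "e t = exp (z * complex_of_real t)" for t
  have de: "(e has_vector_derivative z * e t) (at t within S)" for t S
    unfolding e_def by (rule has_vector_derivative_cexp)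
  define t0 where "t0 = max T 0 + 1"
  have t0: "t0 > T" "t0 > 0" by (auto simp: t0_def)
  have Vt0: "V t0 = C * e t0" using tail t0 by (simp add: e_def)
  have "((\<lambda>t. C * e t) has_vector_derivative C * (z * e t0)) (at t0)"
    by (intro has_vector_derivative_mult_right de)
  then have "(V has_vector_derivative C * (z * e t0)) (at t0)"
    by (rule has_vector_derivative_transform_within_open[where S="{T<..}"])
       (use t0 tail in \<open>auto simp: e_def\<close>)
  moreover have "(V has_vector_derivative V' t0) (at t0)"
  proof -
    have "at t0 within {0..} = at t0"
      using t0 by (intro at_within_interior) simp
    then show ?thesis using d1[of t0] t0 by simp
  qed
  ultimately have V't0: "V' t0 = C * (z * e t0)"
    by (rule vector_derivative_unique_at[symmetric])
  define r where "r t = V' t * e t - V t * (z * e t)" for t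
  have dr: "(r has_vector_derivative V'' t * e t - V t * (z * (z * e t))) (at t within {0..})"
    if "t \<ge> 0" for t
    unfolding r_def using that d1 d2
    by (auto intro!: derivative_eq_intros de simp: algebra_simps)
  have "r t = r t0"
    by (rule halfline_constant[OF dr]) (use ode t0 \<open>t \<ge> 0\<close> in auto)
  then show ?thesis
    unfolding r_def Vt0 V't0 by (simp add: algebra_simps e_def)
qed

(* Consequently such a V has the initial data of C exp(z t) at 0, since V(t) exp(-z t) is
   constant. *)
lemma exp_tail_initial_data:
  fixes V V' V'' :: "real \<Rightarrow> complex"
  assumes d1: "\<And>t. t \<ge> 0 \<Longrightarrow> (V has_vector_derivative V' t) (at t within {0..})"
    and d2: "\<And>t. t \<ge> 0 \<Longrightarrow> (V' has_vector_derivative V'' t) (at t within {0..})"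
    and ode: "\<And>t. t > 0 \<Longrightarrow> V'' t = z * z * V t"
    and tail: "\<And>t. t > T \<Longrightarrow> V t = C * exp (z * complex_of_real t)"
  shows "V 0 = C" and "V' 0 = C * z"
proof -
  have V'_eq: "V' t = z * V t" if "t \<ge> 0" for t
    using exp_tail_first_order[OF d1 d2 ode tail that] .
  define f where "f t = exp (- z * complex_of_real t)" for t
  have df: "(f has_vector_derivative - z * f t) (at t within S)" for t S
    unfolding f_def by (rule has_vector_derivative_cexp)
  define q where "q t = V t * f t" for t
  have dq: "(q has_vector_derivative V t * (- z * f t) + V' t * f t) (at t within {0..})"
    if "t \<ge> 0" for t
    unfolding q_def using that d1 by (auto intro!: derivative_eq_intros df)
  define t0 where "t0 = max T 0 + 1"
  have "q 0 = q t0"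
    by (rule halfline_constant[OF dq]) (use V'_eq in \<open>auto simp: algebra_simps t0_def\<close>)
  moreover have "V t0 = C * exp (z * complex_of_real t0)"
    using tail by (simp add: t0_def)
  ultimately show "V 0 = C"
    unfolding q_def f_def by (simp flip: exp_add)
  with V'_eq[of 0] show "V' 0 = C * z" by simp
qed

definition ker_witness ::
    "nat \<Rightarrow> (nat \<Rightarrow> real) \<Rightarrow> (nat \<Rightarrow> real) \<Rightarrow> complex \<Rightarrow> (nat \<Rightarrow> real \<Rightarrow> complex)
     \<Rightarrow> (nat \<Rightarrow> real \<Rightarrow> complex) \<Rightarrow> (nat \<Rightarrow> real \<Rightarrow> complex) \<Rightarrow> bool" where
  "ker_witness n c a lam u d1 d2 \<longleftrightarrow>
      (\<forall>k\<in>{1..n}.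
         (\<forall>x\<ge>0. (u k has_vector_derivative d1 k x) (at x within {0..})) \<and>
         (\<forall>x\<ge>0. (d1 k has_vector_derivative d2 k x) (at x within {0..})) \<and>
         continuous_on {0..} (d2 k) \<and>
         (\<forall>x>0. - complex_of_real (c k) * d2 k x + complex_of_real (a k) * u k x = lam * u k x)) \<and>
      (\<forall>i\<in>{1..n}. \<forall>k\<in>{1..n}. u i 0 = u k 0) \<and>
      (\<Sum>k\<in>{1..n}. complex_of_real (c k) * d1 k 0) = 0"

lemma kerAT_iff: "u \<in> kerAT n c a lam \<longleftrightarrow> (\<exists>d1 d2. ker_witness n c a lam u d1 d2)"
  unfolding kerAT_def ker_witness_def by simp

lemma ker_witness_edge:
  assumes "ker_witness n c a lam u d1 d2" "k \<in> {1..n}"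
  shows "\<And>t. t \<ge> 0 \<Longrightarrow> (u k has_vector_derivative d1 k t) (at t within {0..})"
    and "\<And>t. t \<ge> 0 \<Longrightarrow> (d1 k has_vector_derivative d2 k t) (at t within {0..})"
    and "continuous_on {0..} (d2 k)"
    and "\<And>t. t > 0 \<Longrightarrow>
           - complex_of_real (c k) * d2 k t + complex_of_real (a k) * u k t = lam * u k t"
  using assms unfolding ker_witness_def by blast+

lemma ker_witness_vertex:
  assumes "ker_witness n c a lam u d1 d2"
  shows "\<And>i k. i \<in> {1..n} \<Longrightarrow> k \<in> {1..n} \<Longrightarrow> u i 0 = u k 0"
    and "(\<Sum>k\<in>{1..n}. complex_of_real (c k) * d1 k 0) = 0"
  using assms unfolding ker_witness_def by blast+

lemma kerAT_combine:
  assumes "u \<in> kerAT n c a lam" "v \<in> kerAT n c a lam"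
  shows "(\<lambda>k t. \<mu> * u k t + v k t) \<in> kerAT n c a lam"
proof -
  obtain d1 d2 e1 e2 where hu: "ker_witness n c a lam u d1 d2"
    and hv: "ker_witness n c a lam v e1 e2"
    using assms unfolding kerAT_iff by blast
  have "ker_witness n c a lam (\<lambda>k t. \<mu> * u k t + v k t)
      (\<lambda>k t. \<mu> * d1 k t + e1 k t) (\<lambda>k t. \<mu> * d2 k t + e2 k t)"
    unfolding ker_witness_def
  proof (intro conjI ballI allI impI)
    fix k and x :: real assume k: "k \<in> {1..n}" and x: "0 \<le> x"
    show "((\<lambda>t. \<mu> * u k t + v k t) has_vector_derivative \<mu> * d1 k x + e1 k x) (at x within {0..})"
      by (intro has_vector_derivative_add has_vector_derivative_mult_right
          ker_witness_edge(1)[OF hu k x] ker_witness_edge(1)[OF hv k x])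
    show "((\<lambda>t. \<mu> * d1 k t + e1 k t) has_vector_derivative \<mu> * d2 k x + e2 k x) (at x within {0..})"
      by (intro has_vector_derivative_add has_vector_derivative_mult_right
          ker_witness_edge(2)[OF hu k x] ker_witness_edge(2)[OF hv k x])
  next
    fix k assume k: "k \<in> {1..n}"
    show "continuous_on {0..} (\<lambda>t. \<mu> * d2 k t + e2 k t)"
      by (intro continuous_on_add continuous_on_mult_left
          ker_witness_edge(3)[OF hu k] ker_witness_edge(3)[OF hv k])
  next
    fix k and x :: real assume k: "k \<in> {1..n}" and x: "0 < x"
    have "- complex_of_real (c k) * (\<mu> * d2 k x + e2 k x) + complex_of_real (a k) * (\<mu> * u k x + v k x)
        = \<mu> * (- complex_of_real (c k) * d2 k x + complex_of_real (a k) * u k x)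
          + (- complex_of_real (c k) * e2 k x + complex_of_real (a k) * v k x)"
      by (simp add: algebra_simps)
    also have "\<dots> = lam * (\<mu> * u k x + v k x)"
      unfolding ker_witness_edge(4)[OF hu k x] ker_witness_edge(4)[OF hv k x]
      by (simp add: algebra_simps)
    finally show "- complex_of_real (c k) * (\<mu> * d2 k x + e2 k x)
        + complex_of_real (a k) * (\<mu> * u k x + v k x) = lam * (\<mu> * u k x + v k x)" .
  next
    fix i k assume "i \<in> {1..n}" "k \<in> {1..n}"
    then show "\<mu> * u i 0 + v i 0 = \<mu> * u k 0 + v k 0"
      using ker_witness_vertex(1)[OF hu] ker_witness_vertex(1)[OF hv] by metis
  next
    have "(\<Sum>k\<in>{1..n}. complex_of_real (c k) * (\<mu> * d1 k 0 + e1 k 0))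
        = \<mu> * (\<Sum>k\<in>{1..n}. complex_of_real (c k) * d1 k 0)
          + (\<Sum>k\<in>{1..n}. complex_of_real (c k) * e1 k 0)"
      by (simp add: sum.distrib sum_distrib_left distrib_left mult.left_commute)
    then show "(\<Sum>k\<in>{1..n}. complex_of_real (c k) * (\<mu> * d1 k 0 + e1 k 0)) = 0"
      unfolding ker_witness_vertex(2)[OF hu] ker_witness_vertex(2)[OF hv] by simp
  qed
  then show ?thesis unfolding kerAT_iff by blast
qed

lemma kerAT_lincomb:
  assumes "finite Q" "\<And>q. q \<in> Q \<Longrightarrow> W q \<in> kerAT n c a lam"
  shows "(\<lambda>k t. \<Sum>q\<in>Q. b q * W q k t) \<in> kerAT n c a lam"
  using assms
proof (induction Q rule: finite_induct)
  case empty
  have "ker_witness n c a lam (\<lambda>k t. 0) (\<lambda>k t. 0) (\<lambda>k t. 0)"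
    unfolding ker_witness_def by simp
  then show ?case unfolding kerAT_iff by auto
next
  case (insert q Q)
  then show ?case
    using kerAT_combine[of "W q" n c a lam "\<lambda>k t. \<Sum>q\<in>Q. b q * W q k t" "b q"] by simp
qed

lemma psqrt_sq: "psqrt z * psqrt z = z"
proof -
  have arg: "exp (\<i> * complex_of_real (arg_pi z)) = exp (\<i> * complex_of_real (Arg z))"
    unfolding arg_pi_def by (auto simp: exp_eq_polar cis.ctr)
  have "psqrt z * psqrt z = complex_of_real (cmod z) * exp (\<i> * complex_of_real (arg_pi z))"
    unfolding psqrt_def by (simp add: exp_add[symmetric] algebra_simps flip: of_real_mult)
  also have "\<dots> = z"
    unfolding arg by (metis cis_conv_exp rcis_cmod_Arg rcis_def)
  finally show ?thesis .
qed

lemma xi_rate_sq: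
  assumes "c k \<noteq> 0"
  shows "complex_of_real (c k) * ((sgn_lam lam * \<i> * xi c a k lam) * (sgn_lam lam * \<i> * xi c a k lam))
           = complex_of_real (a k) - lam"
proof -
  have "sgn_lam lam * sgn_lam lam = 1" by (simp add: sgn_lam_def)
  then have "(sgn_lam lam * \<i> * xi c a k lam) * (sgn_lam lam * \<i> * xi c a k lam)
               = - (xi c a k lam * xi c a k lam)"
    by (simp add: algebra_simps)
  then show ?thesis
    using assms unfolding xi_def psqrt_sq by (simp add: field_simps)
qed

lemma Kmat_first_row_tail:
  assumes "n \<ge> 2" "x < t"
  shows "Kmat n c a lam 1 k x t =
    (if k = 1 then Ffun n c a lam 1 1 x else Ffun n c a lam 2 1 x) / wfun n c a lam
      * exp (sgn_lam lam * \<i> * xi c a k lam * complex_of_real t)"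
proof -
  have "nxt n 1 = 2" using assms(1) by (simp add: nxt_def)
  then show ?thesis using assms(2) unfolding Kmat_def Ffun_def by auto
qed

(* A kernel element all of whose edge components are pure exponentials C_k exp(z_k t) near
   infinity, with c_k z_k^2 = a_k - lam: by unique continuation V_k(0) = C_k and
   V_k'(0) = C_k z_k, so continuity at the vertex makes the amplitudes C_k equal, and the
   Kirchhoff condition then reads C_k * sum_j c_j z_j = 0. *)
lemma kerAT_exp_tails:
  assumes u: "u \<in> kerAT n c a lam"
    and c: "\<And>k. k \<in> {1..n} \<Longrightarrow> c k \<noteq> 0"
    and z: "\<And>k. k \<in> {1..n} \<Longrightarrow> complex_of_real (c k) * (z k * z k) = complex_of_real (a k) - lam"
    and tail: "\<And>k t. k \<in> {1..n} \<Longrightarrow> t > T \<Longrightarrow> u k t = C k * exp (z k * complex_of_real t)"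
    and i: "i \<in> {1..n}"
  shows "C i * (\<Sum>k\<in>{1..n}. complex_of_real (c k) * z k) = 0"
proof -
  obtain d1 d2 where w: "ker_witness n c a lam u d1 d2"
    using u unfolding kerAT_iff by blast
  have init: "u k 0 = C k \<and> d1 k 0 = C k * z k" if k: "k \<in> {1..n}" for k
  proof -
    have ode: "d2 k t = z k * z k * u k t" if "t > 0" for t
    proof -
      have "complex_of_real (c k) * d2 k t = complex_of_real (c k) * (z k * z k) * u k t"
        using ker_witness_edge(4)[OF w k that] unfolding z[OF k] by (simp add: algebra_simps)
      then show ?thesis using c[OF k] by simp
    qed
    show ?thesis
      using exp_tail_initial_data[OF ker_witness_edge(1,2)[OF w k] ode tail[OF k]] by simp
  qed
  have equal: "C k = C i" if k: "k \<in> {1..n}" for k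
  proof -
    have "C k = u k 0" using init[OF k] by simp
    also have "\<dots> = u i 0" by (rule ker_witness_vertex(1)[OF w k i])
    also have "\<dots> = C i" using init[OF i] by simp
    finally show ?thesis .
  qed
  have "C i * (\<Sum>k\<in>{1..n}. complex_of_real (c k) * z k)
      = (\<Sum>k\<in>{1..n}. complex_of_real (c k) * d1 k 0)"
    unfolding sum_distrib_left
  proof (rule sum.cong[OF refl])
    fix k assume k: "k \<in> {1..n}"
    show "C i * (complex_of_real (c k) * z k) = complex_of_real (c k) * d1 k 0"
      using init[OF k] equal[OF k] by simp
  qed
  also have "\<dots> = 0" by (rule ker_witness_vertex(2)[OF w])
  finally show ?thesis .
qed

lemma wfun_rate_sum:
  "wfun n c a lam = (\<Sum>k\<in>{1..n}. complex_of_real (c k) * (sgn_lam lam * \<i> * xi c a k lam))"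
  unfolding wfun_def sgn_lam_def sum_distrib_left[symmetric]
  by (simp add: algebra_simps sum_distrib_left)

lemma Kmat_row_not_kerAT_combination:
  assumes "n \<ge> 2" and c: "\<forall>k\<in>{1..n}. c k > 0" and w: "wfun n c a lam \<noteq> 0"
    and "finite Q" and W: "\<And>q. q \<in> Q \<Longrightarrow> W q \<in> kerAT n c a lam"
    and rep: "\<And>k t. k \<in> {1..n} \<Longrightarrow> t > x \<Longrightarrow>
                Kmat n c a lam 1 k x t = (\<Sum>q\<in>Q. b q * W q k t)"
  shows False
proof -
  define z where "z k = sgn_lam lam * \<i> * xi c a k lam" for k
  define C :: "nat \<Rightarrow> complex" where
    "C k = (if k = 1 then Ffun n c a lam 1 1 x else Ffun n c a lam 2 1 x) / wfun n c a lam" for k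
  have c_nonzero: "c k \<noteq> 0" if "k \<in> {1..n}" for k
    using c that by force
  have z_rate: "complex_of_real (c k) * (z k * z k) = complex_of_real (a k) - lam"
    if "k \<in> {1..n}" for k
    unfolding z_def using c_nonzero[OF that] by (rule xi_rate_sq)
  have tail: "(\<Sum>q\<in>Q. b q * W q k t) = C k * exp (z k * complex_of_real t)"
    if "k \<in> {1..n}" "t > x" for k t
    using rep[OF that] Kmat_first_row_tail[OF \<open>n \<ge> 2\<close> \<open>t > x\<close>]
    unfolding C_def z_def by simp
  have "2 \<in> {1..n}" using \<open>n \<ge> 2\<close> by simp
  from kerAT_exp_tails[OF kerAT_lincomb[OF \<open>finite Q\<close> W] c_nonzero z_rate tail this]
  have "C 2 * wfun n c a lam = 0"
    unfolding wfun_rate_sum z_def .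
  moreover have "C 2 \<noteq> 0"
    using w unfolding C_def Ffun_def by simp
  ultimately show False using w by simp
qed

theorem theorem8p1:
  fixes n :: nat and c a :: "nat \<Rightarrow> real" and lam :: complex
  assumes "n \<ge> 2"
    and "\<forall>k\<in>{1..n}. c k > 0"
    and "\<forall>k\<in>{1..n}. 0 \<le> a k"
    and "\<forall>i\<in>{1..n}. \<forall>k\<in>{1..n}. i \<le> k \<longrightarrow> a i \<le> a k"
    and "lam \<in> resolvent_set n c a"
    and "xi c a 1 lam \<noteq> 0"
    and "wfun n c a lam \<noteq> 0"
  shows "\<not> (\<exists>(p::nat) (W :: nat \<Rightarrow> nat \<Rightarrow> real \<Rightarrow> complex) (\<alpha> :: nat \<Rightarrow> nat \<Rightarrow> complex)
              (\<beta> :: nat \<Rightarrow> nat \<Rightarrow> complex).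
            (\<forall>l\<in>{1..p}. W l \<in> kerAT n c a lam) \<and>
            (\<forall>i\<in>{1..n}. \<forall>k\<in>{1..n}. \<forall>x>0. \<forall>x'>0.
               Kmat n c a lam i k x x' =
                 (if x' \<le> x
                  then (\<Sum>q=1..p. (\<Sum>l=1..p. \<alpha> l q * W l i x) * W q k x')
                  else (\<Sum>q=1..p. (\<Sum>l=1..p. \<beta> l q * W l i x) * W q k x'))))"
proof (intro notI, elim exE conjE)
  fix p :: nat and W :: "nat \<Rightarrow> nat \<Rightarrow> real \<Rightarrow> complex" and \<alpha> \<beta> :: "nat \<Rightarrow> nat \<Rightarrow> complex"
  assume W: "\<forall>l\<in>{1..p}. W l \<in> kerAT n c a lam"
    and K: "\<forall>i\<in>{1..n}. \<forall>k\<in>{1..n}. \<forall>x>0. \<forall>x'>0.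
               Kmat n c a lam i k x x' =
                 (if x' \<le> x
                  then (\<Sum>q=1..p. (\<Sum>l=1..p. \<alpha> l q * W l i x) * W q k x')
                  else (\<Sum>q=1..p. (\<Sum>l=1..p. \<beta> l q * W l i x) * W q k x'))"
  have row: "Kmat n c a lam 1 k 1 t = (\<Sum>q\<in>{1..p}. (\<Sum>l=1..p. \<beta> l q * W l 1 1) * W q k t)"
    if "k \<in> {1..n}" "t > 1" for k t
    using K[rule_format, of 1 k 1 t] that \<open>n \<ge> 2\<close> by simp
  show False
    by (rule Kmat_row_not_kerAT_combination[OF \<open>n \<ge> 2\<close> assms(2,7) finite_atLeastAtMost[of 1 p],
          where W=W and x=1 and b="\<lambda>q. \<Sum>l=1..p. \<beta> l q * W l 1 1"])
       (use W row in auto)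
qed

end
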